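(* For all integers $n,d\ge0$, $T(n,\omega^d)\le P(n,\omega^d)$.
   Context: $[c]=\{1,\dots,c\}$; ordinals are identified with sets of smaller ordinals; $\approx$ is order-equivalence; $\binom{S}{n}$ is the set of $n$-element subsets. $T(n,S)$ is the least $t\in\mathbb{N}$ such that for every $c\ge1$ and every $\mathrm{COL}:\binom{S}{n}\to[c]$ there is $S'\subseteq S$, $S'\approx S$, with $|\mathrm{COL}(\binom{S'}{n})|\le t$ ($\infty$ if none). Every $\beta<\omega^d\cdot k$ is uniquely $\omega^d b+\sum_{j<d}\omega^j a_j$ with $0\le b<k$, $a_j\in\mathbb{N}$. A coloring rule (CR) on $\binom{\omega^d\cdot k}{n}$ is a pair $(\mathcal{Y},\preceq)$ with $\mathcal{Y}:\{1,\dots,n\}\to\{0,\dots,k-1\}$ and $\preceq$ a total preorder on $I=\{(i,j):1\le i\le n,0\le j<d\}$ (with induced equivalence $\equiv$ and strict part $\prec$) such that: (1) if $d\ge1$, $(i,0)\prec(i',0)$ for $i<i'$; if $d=0$, $\mathcal{Y}(i)<\mathcal{Y}(i')$ for $i<i'$; (2) $(i,j)\equiv(i',j)$ for some $j$ implies $\mathcal{Y}(i)=\mathcal{Y}(i')$; (3) $(i,j)\prec(i,j')$ for $j>j'$; (4) $(i,j)\equiv(i',j')$ implies $j=j'$; (5) for $j>0$, $(i,j)\not\equiv(i',j)$ implies $(i,j-1)\not\equiv(i',j-1)$. $P(n,\omega^d\cdot k)$ is the total number of CRs on $\binom{\omega^d\cdot k}{n}$, and $P(n,\omega^d)=P(n,\omega^d\cdot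 1)$. *)

theory Defs
  imports Main "HOL-Library.FuncSet" "HOL-Library.List_Lexorder" "HOL-Library.Extended_Nat"
begin

definition order_equiv :: "'a::linorder set \<Rightarrow> 'a set \<Rightarrow> bool" where
  "order_equiv A B \<longleftrightarrow> (\<exists>f. bij_betw f A B \<and> strict_mono_on A f)"

definition nsubsets :: "'a set \<Rightarrow> nat \<Rightarrow> 'a set set" where
  "nsubsets S n = {X. X \<subseteq> S \<and> finite X \<and> card X = n}"

definition T_bound_ok :: "nat \<Rightarrow> 'a::linorder set \<Rightarrow> nat \<Rightarrow> bool" where
  "T_bound_ok n S t \<longleftrightarrow>
     (\<forall>c::nat. c \<ge> 1 \<longrightarrow> (\<forall>COL :: 'a set \<Rightarrow> nat.
        (\<forall>X\<in>nsubsets S n. COL X \<in> {1..c}) \<longrightarrow>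
        (\<exists>S'. S' \<subseteq> S \<and> order_equiv S' S \<and> card (COL ` nsubsets S' n) \<le> t)))"

definition T_num :: "nat \<Rightarrow> 'a::linorder set \<Rightarrow> enat" where
  "T_num n S = (if \<exists>t. T_bound_ok n S t then enat (LEAST t. T_bound_ok n S t) else \<infinity>)"

text \<open>The ordinal omega^d (d finite) is represented by its Cantor normal form
  coefficient lists [a_(d-1), ..., a_0] of length d, ordered lexicographically
  (most significant coefficient first); this has order type omega^d.\<close>

definition omega_pow :: "nat \<Rightarrow> nat list set" where
  "omega_pow d = {xs. length xs = d}"

definition CR_index :: "nat \<Rightarrow> nat \<Rightarrow> (nat \<times> nat) set" where
  "CR_index n d = {1..n} \<times> {0..<d}"

definition is_CR :: "nat \<Rightarrow> nat \<Rightarrow> nat \<Rightarrow> (nat \<Rightarrow> nat) \<Rightarrow> ((nat \<times> nat) \<times> (nat \<times> nat)) set \<Rightarrow> bool" where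
  "is_CR n d k Y R \<longleftrightarrow>
     (let I = CR_index n d;
          prec = (\<lambda>x y. (x, y) \<in> R \<and> (y, x) \<notin> R);
          eqv = (\<lambda>x y. (x, y) \<in> R \<and> (y, x) \<in> R)
      in Y \<in> {1..n} \<rightarrow>\<^sub>E {0..<k}
       \<and> R \<subseteq> I \<times> I \<and> preorder_on I R \<and> total_on I R
       \<comment> \<open>(1)\<close>
       \<and> (d \<ge> 1 \<longrightarrow> (\<forall>i\<in>{1..n}. \<forall>i'\<in>{1..n}. i < i' \<longrightarrow> prec (i, 0) (i', 0)))
       \<and> (d = 0 \<longrightarrow> (\<forall>i\<in>{1..n}. \<forall>i'\<in>{1..n}. i < i' \<longrightarrow> Y i < Y i'))
       \<comment> \<open>(2)\<close>
       \<and> (\<forall>i\<in>{1..n}. \<forall>i'\<in>{1..n}. \<forall>j<d. eqv (i, j) (i', j) \<longrightarrow> Y i = Y i')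
       \<comment> \<open>(3)\<close>
       \<and> (\<forall>i\<in>{1..n}. \<forall>j<d. \<forall>j'<d. j > j' \<longrightarrow> prec (i, j) (i, j'))
       \<comment> \<open>(4)\<close>
       \<and> (\<forall>i\<in>{1..n}. \<forall>i'\<in>{1..n}. \<forall>j<d. \<forall>j'<d. eqv (i, j) (i', j') \<longrightarrow> j = j')
       \<comment> \<open>(5)\<close>
       \<and> (\<forall>i\<in>{1..n}. \<forall>i'\<in>{1..n}. \<forall>j<d. j > 0 \<longrightarrow>
            \<not> eqv (i, j) (i', j) \<longrightarrow> \<not> eqv (i, j - 1) (i', j - 1)))"

definition P_num :: "nat \<Rightarrow> nat \<Rightarrow> nat \<Rightarrow> nat" where
  "P_num n d k = card {(Y, R). is_CR n d k Y R}"

end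

theory Submission
  imports Defs "HOL-Library.Ramsey" "HOL-Library.Nat_Bijection" "HOL-Library.Infinite_Set"
begin

(* By Ramsey's theorem, a colouring of the n-subsets of omega^d becomes, on a suitable copy of
   omega^d, a function of the coordinate pattern of the n-set alone: the total preorder in which
   the n * d Cantor normal form coefficients of its elements compare.  The copy is the image of
   omega^d under x |-> (e (x|1), ..., e (x|d)), where x|t is the prefix of length t and e is an
   injective code for prefixes followed by the enumeration of an infinite set H.  There two
   coefficients coincide only if the prefixes ending in them coincide, which forces every pattern
   that occurs to be a coloring rule (with Y = 0).  An n-set is determined by its pattern and its
   set of coefficient values, so applying Ramsey's theorem to the value sets in H, once for each
   rule, leaves at most one colour per rule. *)

definition induced_preorder :: "'a set \<Rightarrow> ('a \<Rightarrow> 'b::order) \<Rightarrow> ('a \<times> 'a) set" where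
  "induced_preorder I f = {(p, q). p \<in> I \<and> q \<in> I \<and> f p \<le> f q}"

lemma in_induced_preorder [simp]:
  "(p, q) \<in> induced_preorder I f \<longleftrightarrow> p \<in> I \<and> q \<in> I \<and> f p \<le> f q"
  by (simp add: induced_preorder_def)

lemma preorder_on_induced_preorder: "preorder_on I (induced_preorder I f)"
  unfolding preorder_on_def refl_on_def trans_def by (auto intro: order_trans)

lemma total_on_induced_preorder:
  fixes f :: "'a \<Rightarrow> 'b::linorder"
  shows "total_on I (induced_preorder I f)"
  unfolding total_on_def by auto

lemma induced_preorder_equiv_iff:
  "(p, q) \<in> induced_preorder I f \<and> (q, p) \<in> induced_preorder I f \<longleftrightarrow> p \<in> I \<and> q \<in> I \<and> f p = f q"
  by (auto intro: order.antisym)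

lemma induced_preorder_strict_iff:
  "(p, q) \<in> induced_preorder I f \<and> (q, p) \<notin> induced_preorder I f \<longleftrightarrow> p \<in> I \<and> q \<in> I \<and> f p < f q"
  by (auto simp: less_le_not_le)

lemma induced_preorder_cong:
  "(\<And>p. p \<in> I \<Longrightarrow> f p = g p) \<Longrightarrow> induced_preorder I f = induced_preorder I g"
  by (auto simp: induced_preorder_def)

lemma induced_preorder_strict_mono_comp:
  fixes f :: "'a \<Rightarrow> 'b::linorder" and e :: "'b \<Rightarrow> 'c::linorder"
  assumes "strict_mono e"
  shows "induced_preorder I (\<lambda>p. e (f p)) = induced_preorder I f"
  by (auto simp: induced_preorder_def strict_mono_less_eq[OF assms])

lemma card_quotient_induced_preorder:
  fixes I :: "'a set" and f :: "'a \<Rightarrow> 'b::order"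
  defines "R \<equiv> induced_preorder I f"
  shows "card (I // (R \<inter> R\<inverse>)) = card (f ` I)"
proof -
  have "(R \<inter> R\<inverse>) `` {p} = {q \<in> I. f q = f p}" if "p \<in> I" for p
    using that by (auto simp: R_def intro: order.antisym)
  then have "I // (R \<inter> R\<inverse>) = (\<lambda>v. {q \<in> I. f q = v}) ` f ` I"
    by (auto simp: quotient_def image_image)
  moreover have "inj_on (\<lambda>v. {q \<in> I. f q = v}) (f ` I)"
    by (rule inj_onI) blast
  ultimately show ?thesis
    by (simp add: card_image)
qed

lemma strict_mono_on_onto_self_eq:
  fixes h :: "'a::wellorder \<Rightarrow> 'a"
  assumes mono: "strict_mono_on A h" and onto: "h ` A = A" and "x \<in> A"
  shows "h x = x"
  using \<open>x \<in> A\<close>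
proof (induction x rule: less_induct)
  case (less x)
  show ?case
  proof (rule linorder_cases[of "h x" x])
    assume "h x < x"
    moreover have "h x \<in> A"
      using less.prems onto by blast
    ultimately have "h (h x) = h x"
      using less.IH by blast
    then show ?thesis
      using strict_mono_on_eqD[OF mono _ \<open>h x \<in> A\<close> less.prems] by metis
  next
    assume "x < h x"
    obtain y where y: "y \<in> A" "h y = x"
      using less.prems onto by (metis imageE)
    show ?thesis
    proof (rule linorder_cases[of y x])
      assume "y < x"
      then show ?thesis
        using less.IH y by simp
    next
      assume "x < y"
      then have "h x < h y"
        using mono less.prems y(1) by (simp add: strict_mono_onD)
      then show ?thesis
        using \<open>x < h x\<close> y(2) by simp
    qed (use y in simp)
  qed
qed

lemma eq_on_if_same_induced_preorder_image:
  fixes f g :: "'a \<Rightarrow> 'b::wellorder"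
  assumes same_order: "induced_preorder I f = induced_preorder I g"
    and same_image: "f ` I = g ` I" and "p \<in> I"
  shows "f p = g p"
proof -
  have le_iff: "f q \<le> f r \<longleftrightarrow> g q \<le> g r" if "q \<in> I" "r \<in> I" for q r
    using same_order that by (metis in_induced_preorder)
  define h where "h = g \<circ> inv_into I f"
  have h_f: "h (f q) = g q" if "q \<in> I" for q
  proof -
    let ?q' = "inv_into I f (f q)"
    have "?q' \<in> I" "f ?q' = f q"
      using that by (auto intro: inv_into_into f_inv_into_f)
    then show ?thesis
      using le_iff[of ?q' q] le_iff[of q ?q'] that by (simp add: h_def order.antisym)
  qed
  have "strict_mono_on (f ` I) h"
    by (rule strict_mono_onI) (auto simp: h_f le_iff less_le_not_le)
  moreover have "h ` f ` I = g ` I"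
    unfolding image_image using h_f by simp
  ultimately have "h (f p) = f p"
    using strict_mono_on_onto_self_eq same_image \<open>p \<in> I\<close> by blast
  then show ?thesis
    using h_f \<open>p \<in> I\<close> by simp
qed

section \<open>Ramsey's theorem for finitely many colourings\<close>

lemma Ramsey_simultaneous:
  fixes \<chi> :: "'k \<Rightarrow> 'a set \<Rightarrow> nat"
  assumes "finite K" and "infinite Z"
    and "\<And>k X. k \<in> K \<Longrightarrow> X \<in> [Z]\<^bsup>m k\<^esup> \<Longrightarrow> \<chi> k X < s"
  shows "\<exists>H \<subseteq> Z. infinite H \<and> (\<forall>k\<in>K. \<exists>t. \<forall>X \<in> [H]\<^bsup>m k\<^esup>. \<chi> k X = t)"
  using assms
proof (induction K arbitrary: Z rule: finite_induct)
  case empty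
  then show ?case by blast
next
  case (insert k K)
  obtain H1 where H1: "H1 \<subseteq> Z" "infinite H1" "\<forall>k'\<in>K. \<exists>t. \<forall>X \<in> [H1]\<^bsup>m k'\<^esup>. \<chi> k' X = t"
    using insert.IH[OF insert.prems(1)] insert.prems(2) by blast
  have "\<forall>X. X \<subseteq> H1 \<and> finite X \<and> card X = m k \<longrightarrow> \<chi> k X < s"
    using insert.prems(2) H1(1) by (auto simp: nsets_def)
  from Ramsey[OF H1(2) this] obtain H2 t where H2: "H2 \<subseteq> H1" "infinite H2"
      "\<forall>X. X \<subseteq> H2 \<and> finite X \<and> card X = m k \<longrightarrow> \<chi> k X = t"
    by blast
  have "\<forall>k'\<in>K. \<exists>t. \<forall>X \<in> [H2]\<^bsup>m k'\<^esup>. \<chi> k' X = t"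
    using H1(3) nsets_mono[OF H2(1)] by blast
  moreover have "\<forall>X \<in> [H2]\<^bsup>m k\<^esup>. \<chi> k X = t"
    using H2(3) by (simp add: nsets_def)
  ultimately show ?case
    using H1(1) H2(1,2) by blast
qed

lemma Ramsey_colouring_by_pattern:
  fixes COL :: "'a \<Rightarrow> nat" and pattern :: "'a \<Rightarrow> 'k" and vals :: "'a \<Rightarrow> 'b set"
  assumes "finite K" and "infinite Z"
    and COL: "\<And>X. X \<in> A \<Longrightarrow> COL X \<le> c"
    and determined: "\<And>X X'. X \<in> A \<Longrightarrow> X' \<in> A \<Longrightarrow> pattern X = pattern X' \<Longrightarrow> vals X = vals X' \<Longrightarrow> X = X'"
  obtains H colour where "H \<subseteq> Z" and "infinite H"
    and "\<And>X. X \<in> A \<Longrightarrow> pattern X \<in> K \<Longrightarrow> vals X \<in> [H]\<^bsup>m (pattern X)\<^esup> \<Longrightarrow> COL X = colour (pattern X)"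
proof -
  define typed where "typed k V X \<longleftrightarrow> X \<in> A \<and> pattern X = k \<and> vals X = V" for k V X
  define \<chi> where "\<chi> k V = (if \<exists>X. typed k V X then COL (SOME X. typed k V X) else 0)" for k V
  have "\<chi> k V < Suc c" for k V
    using COL someI_ex[of "typed k V"] by (auto simp: \<chi>_def typed_def le_imp_less_Suc)
  with assms(1,2) have "\<exists>H \<subseteq> Z. infinite H \<and> (\<forall>k\<in>K. \<exists>t. \<forall>V \<in> [H]\<^bsup>m k\<^esup>. \<chi> k V = t)"
    by (rule Ramsey_simultaneous)
  then obtain H where H: "H \<subseteq> Z" "infinite H"
    and homogeneous: "\<forall>k\<in>K. \<exists>t. \<forall>V \<in> [H]\<^bsup>m k\<^esup>. \<chi> k V = t"
    by blast
  from bchoice[OF homogeneous] obtain colour where colour: "\<forall>k\<in>K. \<forall>V \<in> [H]\<^bsup>m k\<^esup>. \<chi> k V = colour k"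
    by blast
  have \<chi>_pattern: "\<chi> (pattern X) (vals X) = COL X" if X: "X \<in> A" for X
  proof -
    have typed_X: "typed (pattern X) (vals X) X"
      using X by (simp add: typed_def)
    have "(SOME X'. typed (pattern X) (vals X) X') = X"
    proof (rule some_equality)
      show "X' = X" if "typed (pattern X) (vals X) X'" for X'
        using that X determined[of X' X] by (simp add: typed_def)
    qed (rule typed_X)
    moreover have "\<exists>X'. typed (pattern X) (vals X) X'"
      using typed_X by blast
    ultimately show ?thesis
      by (simp add: \<chi>_def)
  qed
  show ?thesis
  proof (rule that[OF H])
    fix X
    assume "X \<in> A" and "pattern X \<in> K" and "vals X \<in> [H]\<^bsup>m (pattern X)\<^esup>"
    then have "\<chi> (pattern X) (vals X) = colour (pattern X)"
      using colour by blast
    then show "COL X = colour (pattern X)"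
      using \<chi>_pattern[OF \<open>X \<in> A\<close>] by simp
  qed
qed

section \<open>Prefix codes and a copy of omega^d\<close>

definition prefix_code :: "nat list \<Rightarrow> nat" where
  "prefix_code xs = list_encode (rev xs)"

lemma prefix_code_eq_iff: "prefix_code xs = prefix_code ys \<longleftrightarrow> xs = ys"
  unfolding prefix_code_def by (metis list_encode_inverse rev_rev_ident)

lemma prefix_code_snoc: "prefix_code (xs @ [a]) = Suc (prod_encode (a, prefix_code xs))"
  by (simp add: prefix_code_def)

lemma prefix_code_take_less:
  assumes "k < k'" and "k' \<le> length xs"
  shows "prefix_code (take k xs) < prefix_code (take k' xs)"
  using assms
proof (induction k')
  case 0
  then show ?case by simp
next
  case (Suc k')
  have "prefix_code (take k' xs) < prefix_code (take (Suc k') xs)"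
    using Suc.prems le_prod_encode_2
    by (simp add: take_Suc_conv_app_nth prefix_code_snoc le_imp_less_Suc)
  then show ?case
    using Suc by (cases "k = k'") auto
qed

lemma prefix_code_snoc_less_snoc:
  assumes "a < b"
  shows "prefix_code (xs @ [a]) < prefix_code (xs @ [b])"
proof -
  have "triangle (a + c) \<le> triangle (b + c)" for c
    unfolding triangle_def using assms by (intro div_le_mono mult_le_mono) auto
  then show ?thesis
    using assms by (simp add: prefix_code_snoc prod_encode_def add_le_less_mono)
qed

definition prefix_embedding :: "nat set \<Rightarrow> nat list \<Rightarrow> nat list" where
  "prefix_embedding H xs = map (\<lambda>t. enumerate H (prefix_code (take (Suc t) xs))) [0..<length xs]"

lemma length_prefix_embedding [simp]: "length (prefix_embedding H xs) = length xs"
  by (simp add: prefix_embedding_def)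

lemma nth_prefix_embedding:
  "t < length xs \<Longrightarrow> prefix_embedding H xs ! t = enumerate H (prefix_code (take (Suc t) xs))"
  by (simp add: prefix_embedding_def)

lemma last_prefix_embedding:
  assumes "xs \<noteq> []"
  shows "last (prefix_embedding H xs) = enumerate H (prefix_code xs)"
proof -
  have "prefix_embedding H xs \<noteq> []"
    using assms by (metis length_0_conv length_prefix_embedding)
  then show ?thesis
    using assms by (simp add: last_conv_nth nth_prefix_embedding)
qed

lemma prefix_embedding_less:
  assumes H: "infinite H" and len: "length xs = length ys" and "xs < ys"
  shows "prefix_embedding H xs < prefix_embedding H ys"
proof -
  obtain i where i: "i < length xs" "take i xs = take i ys" "xs ! i < ys ! i"
    using \<open>xs < ys\<close> len by (auto simp: list_less_def lexord_take_index_conv)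
  have same_prefix: "take i (prefix_embedding H xs) = take i (prefix_embedding H ys)"
  proof (rule nth_equalityI)
    fix t assume "t < length (take i (prefix_embedding H xs))"
    then have "t < i" by simp
    then have "take (Suc t) xs = take (Suc t) ys"
      by (metis i(2) Suc_leI min.absorb1 take_take)
    then show "take i (prefix_embedding H xs) ! t = take i (prefix_embedding H ys) ! t"
      using \<open>t < i\<close> i(1) len by (simp add: nth_prefix_embedding)
  qed (use len in simp)
  have "take (Suc i) xs = take i xs @ [xs ! i]" "take (Suc i) ys = take i xs @ [ys ! i]"
    using i len by (auto simp: take_Suc_conv_app_nth)
  then have "prefix_embedding H xs ! i < prefix_embedding H ys ! i"
    using i len H
    by (simp add: nth_prefix_embedding prefix_code_snoc_less_snoc strict_mono_less[OF strict_mono_enumerate])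
  then show ?thesis
    using same_prefix i(1) len by (auto simp: list_less_def lexord_take_index_conv)
qed

lemma order_equiv_strict_mono_image:
  fixes f :: "'a::linorder \<Rightarrow> 'a"
  assumes "strict_mono_on S f"
  shows "order_equiv (f ` S) S"
proof -
  have inj: "inj_on f S"
    using assms by (rule strict_mono_on_imp_inj_on)
  have "strict_mono_on (f ` S) (inv_into S f)"
    by (rule strict_mono_onI) (auto simp: inv_into_f_f[OF inj] strict_mono_on_less[OF assms])
  moreover have "bij_betw (inv_into S f) (f ` S) S"
    using inj by (simp add: bij_betw_inv_into inj_on_imp_bij_betw)
  ultimately show ?thesis
    unfolding order_equiv_def by blast
qed

lemma prefix_embedding_omega_pow:
  assumes "infinite H"
  shows "prefix_embedding H ` omega_pow d \<subseteq> omega_pow d"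
    and "order_equiv (prefix_embedding H ` omega_pow d) (omega_pow d)"
proof -
  show "prefix_embedding H ` omega_pow d \<subseteq> omega_pow d"
    by (auto simp: omega_pow_def)
  have "strict_mono_on (omega_pow d) (prefix_embedding H)"
    by (rule strict_mono_onI) (simp add: omega_pow_def prefix_embedding_less[OF assms])
  then show "order_equiv (prefix_embedding H ` omega_pow d) (omega_pow d)"
    by (rule order_equiv_strict_mono_image)
qed

lemma inj_on_last_prefix_embedding:
  assumes "infinite H"
  shows "inj_on last (prefix_embedding H ` omega_pow d)"
proof (rule inj_onI)
  fix u v
  assume "u \<in> prefix_embedding H ` omega_pow d" "v \<in> prefix_embedding H ` omega_pow d"
    and last_eq: "last u = last v"
  then obtain xs ys where xs: "xs \<in> omega_pow d" "u = prefix_embedding H xs"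
    and ys: "ys \<in> omega_pow d" "v = prefix_embedding H ys"
    by blast
  show "u = v"
  proof (cases "d = 0")
    case False
    then have "xs \<noteq> []" "ys \<noteq> []"
      using xs ys by (auto simp: omega_pow_def)
    then have "enumerate H (prefix_code xs) = enumerate H (prefix_code ys)"
      using last_eq xs ys by (simp add: last_prefix_embedding)
    then have "xs = ys"
      using strict_mono_eq[OF strict_mono_enumerate[OF assms]] by (simp add: prefix_code_eq_iff)
    then show ?thesis
      using xs ys by simp
  qed (use xs ys in \<open>simp add: omega_pow_def\<close>)
qed

lemma nsubsets_prefix_embedding:
  assumes "infinite H" and "X \<in> nsubsets (prefix_embedding H ` omega_pow d) n"
  shows "X \<in> nsubsets (omega_pow d) n" and "inj_on last X"
  using assms prefix_embedding_omega_pow(1)[OF assms(1), of d]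
    inj_on_subset[OF inj_on_last_prefix_embedding[OF assms(1)]]
  by (auto simp: nsubsets_def)

section \<open>Coordinate patterns of finite sets of lists\<close>

definition kth_by :: "('a \<Rightarrow> 'b::linorder) \<Rightarrow> 'a set \<Rightarrow> nat \<Rightarrow> 'a" where
  "kth_by key X i = inv_into X key (sorted_list_of_set (key ` X) ! (i - 1))"

lemma kth_by:
  assumes "finite X" and inj: "inj_on key X" and "card X = n"
  shows "\<And>i. i \<in> {1..n} \<Longrightarrow> kth_by key X i \<in> X"
    and "kth_by key X ` {1..n} = X"
    and "\<And>i i'. i \<in> {1..n} \<Longrightarrow> i' \<in> {1..n} \<Longrightarrow> i < i' \<Longrightarrow>
           key (kth_by key X i) < key (kth_by key X i')"
proof -
  define L where "L = sorted_list_of_set (key ` X)"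
  have len: "length L = n"
    unfolding L_def using assms by (simp add: card_image)
  have set: "set L = key ` X"
    unfolding L_def using assms by simp
  have kth: "kth_by key X i = inv_into X key (L ! (i - 1))" for i
    unfolding kth_by_def L_def by simp
  have in_keys: "L ! (i - 1) \<in> key ` X" if "i \<in> {1..n}" for i
    using that len set by (metis atLeastAtMost_iff diff_less le_trans less_numeral_extra(1) linorder_not_le nth_mem)
  show mem: "kth_by key X i \<in> X" if "i \<in> {1..n}" for i
    unfolding kth using in_keys[OF that] by (rule inv_into_into)
  have key_kth: "key (kth_by key X i) = L ! (i - 1)" if "i \<in> {1..n}" for i
    unfolding kth using in_keys[OF that] by (rule f_inv_into_f)
  show "kth_by key X ` {1..n} = X"
  proof
    show "X \<subseteq> kth_by key X ` {1..n}"
    proof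
      fix x assume "x \<in> X"
      then obtain k where "k < n" "L ! k = key x"
        using set len by (metis imageI in_set_conv_nth)
      then have "kth_by key X (Suc k) = x"
        unfolding kth using \<open>x \<in> X\<close> inj by simp
      then show "x \<in> kth_by key X ` {1..n}"
        using \<open>k < n\<close> by force
    qed
  qed (use mem in blast)
  show "key (kth_by key X i) < key (kth_by key X i')"
    if "i \<in> {1..n}" "i' \<in> {1..n}" "i < i'" for i i'
    unfolding key_kth[OF that(1)] key_kth[OF that(2)]
    using sorted_wrt_nth_less[of "(<)" L "i - 1" "i' - 1"] that len by (auto simp: L_def)
qed

(* The coefficient of omega^j in the i-th element of X, the elements being listed by increasing
   last (least significant) entry; a list stores that coefficient at position d - 1 - j. *)
definition coord :: "nat \<Rightarrow> nat list set \<Rightarrow> nat \<times> nat \<Rightarrow> nat" where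
  "coord d X p = kth_by last X (fst p) ! (d - 1 - snd p)"

lemma coord_determines_set:
  assumes X: "X \<in> nsubsets (omega_pow d) n" "inj_on last X"
    and X': "X' \<in> nsubsets (omega_pow d) n" "inj_on last X'"
    and same_order: "induced_preorder (CR_index n d) (coord d X) = induced_preorder (CR_index n d) (coord d X')"
    and same_values: "coord d X ` CR_index n d = coord d X' ` CR_index n d"
  shows "X = X'"
proof -
  have fin: "finite X" "card X = n" "finite X'" "card X' = n"
    using X(1) X'(1) by (auto simp: nsubsets_def)
  have len: "length (kth_by last X i) = d" "length (kth_by last X' i) = d" if "i \<in> {1..n}" for i
    using kth_by(1)[OF fin(1) X(2) fin(2) that] kth_by(1)[OF fin(3) X'(2) fin(4) that] X(1) X'(1)
    by (auto simp: nsubsets_def omega_pow_def)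
  have "kth_by last X i = kth_by last X' i" if i: "i \<in> {1..n}" for i
  proof (rule nth_equalityI)
    fix t assume "t < length (kth_by last X i)"
    then have "(i, d - 1 - t) \<in> CR_index n d" "t < d"
      using i len[OF i] by (auto simp: CR_index_def)
    then show "kth_by last X i ! t = kth_by last X' i ! t"
      using eq_on_if_same_induced_preorder_image[OF same_order same_values] by (fastforce simp: coord_def)
  qed (simp add: len[OF i])
  then show ?thesis
    using kth_by(2)[OF fin(1) X(2) fin(2)] kth_by(2)[OF fin(3) X'(2) fin(4)]
    by (metis image_cong)
qed

section \<open>Patterns in the copy of omega^d are coloring rules\<close>

lemma take_eq_take_imp_eq_index:
  "take k xs = take k' ys \<Longrightarrow> k \<le> length xs \<Longrightarrow> k' \<le> length ys \<Longrightarrow> k = k'"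
  by (metis length_take min.absorb2)

lemma take_eq_take_antimono: "take k xs = take k ys \<Longrightarrow> k' \<le> k \<Longrightarrow> take k' xs = take k' ys"
  by (metis min.absorb1 take_take)

lemma is_CR_prefix_preorder:
  fixes z :: "nat \<Rightarrow> nat list"
  assumes len: "\<And>i. i \<in> {1..n} \<Longrightarrow> length (z i) = d"
    and sorted: "\<And>i i'. i \<in> {1..n} \<Longrightarrow> i' \<in> {1..n} \<Longrightarrow> i < i' \<Longrightarrow> prefix_code (z i) < prefix_code (z i')"
  shows "is_CR n d 1 (\<lambda>i\<in>{1..n}. 0)
           (induced_preorder (CR_index n d) (\<lambda>(i, j). prefix_code (take (d - j) (z i))))"
    (is "is_CR _ _ _ _ (induced_preorder ?I ?G)")
proof -
  let ?R = "induced_preorder ?I ?G"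
  have I: "(i, j) \<in> ?I \<longleftrightarrow> i \<in> {1..n} \<and> j < d" for i j
    by (auto simp: CR_index_def)
  have ordered_by_last:
    "((i, 0), (i', 0)) \<in> ?R \<and> ((i', 0), (i, 0)) \<notin> ?R"
    if "d \<ge> 1" "i \<in> {1..n}" "i' \<in> {1..n}" "i < i'" for i i'
    unfolding induced_preorder_strict_iff using that sorted[of i i'] len by (simp add: I)
  have at_most_one_if_d0: False if "d = 0" "i \<in> {1..n}" "i' \<in> {1..n}" "i < i'" for i i'
    using that sorted[of i i'] len[of i] len[of i'] by simp
  have digits_decrease:
    "((i, j), (i, j')) \<in> ?R \<and> ((i, j'), (i, j)) \<notin> ?R"
    if "i \<in> {1..n}" "j < d" "j' < j" for i j j'
  proof -
    have "prefix_code (take (d - j) (z i)) < prefix_code (take (d - j') (z i))"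
      using that len[OF that(1)] by (intro prefix_code_take_less) auto
    then show ?thesis
      unfolding induced_preorder_strict_iff using that by (simp add: I)
  qed
  have equiv_same_level: "j = j'"
    if "((i, j), (i', j')) \<in> ?R \<and> ((i', j'), (i, j)) \<in> ?R"
      "i \<in> {1..n}" "i' \<in> {1..n}" "j < d" "j' < d" for i i' j j'
  proof -
    have "take (d - j) (z i) = take (d - j') (z i')"
      using that(1) unfolding induced_preorder_equiv_iff by (simp add: prefix_code_eq_iff)
    then have "d - j = d - j'"
      by (rule take_eq_take_imp_eq_index) (simp_all add: len[OF that(2)] len[OF that(3)])
    then show ?thesis
      using that(4,5) by simp
  qed
  have equiv_propagates:
    "((i, j), (i', j)) \<in> ?R \<and> ((i', j), (i, j)) \<in> ?R"
    if "((i, j - 1), (i', j - 1)) \<in> ?R \<and> ((i', j - 1), (i, j - 1)) \<in> ?R"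
      "i \<in> {1..n}" "i' \<in> {1..n}" "0 < j" "j < d" for i i' j
  proof -
    have "take (Suc (d - j)) (z i) = take (Suc (d - j)) (z i')"
      using that(1,4,5) unfolding induced_preorder_equiv_iff by (simp add: prefix_code_eq_iff Suc_diff_le)
    then have "take (d - j) (z i) = take (d - j) (z i')"
      by (rule take_eq_take_antimono) simp
    then show ?thesis
      unfolding induced_preorder_equiv_iff using that(2-5) by (simp add: I)
  qed
  show ?thesis
    unfolding is_CR_def Let_def
  proof (intro conjI)
    show "?R \<subseteq> ?I \<times> ?I"
      by auto
  qed (use preorder_on_induced_preorder total_on_induced_preorder ordered_by_last
      at_most_one_if_d0 digits_decrease equiv_same_level equiv_propagates in \<open>blast | simp\<close>)+
qed

lemma coord_prefix_embedding:
  assumes H: "infinite H" and X: "X \<in> nsubsets (prefix_embedding H ` omega_pow d) n"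
  obtains z where "\<And>i. i \<in> {1..n} \<Longrightarrow> length (z i) = d"
    and "\<And>i i'. i \<in> {1..n} \<Longrightarrow> i' \<in> {1..n} \<Longrightarrow> i < i' \<Longrightarrow> prefix_code (z i) < prefix_code (z i')"
    and "\<And>i j. (i, j) \<in> CR_index n d \<Longrightarrow> coord d X (i, j) = enumerate H (prefix_code (take (d - j) (z i)))"
proof
  let ?S = "omega_pow d" and ?e = "prefix_embedding H"
  have X_sub: "X \<subseteq> ?e ` ?S" and fin: "finite X" "card X = n"
    using X by (auto simp: nsubsets_def)
  have inj: "inj_on last X"
    using inj_on_subset[OF inj_on_last_prefix_embedding[OF H] X_sub] .
  define z where "z i = inv_into ?S ?e (kth_by last X i)" for i
  have z: "z i \<in> ?S" "?e (z i) = kth_by last X i" if "i \<in> {1..n}" for i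
    using kth_by(1)[OF fin(1) inj fin(2) that] X_sub unfolding z_def
    by (auto intro: inv_into_into f_inv_into_f)
  show len: "length (z i) = d" if "i \<in> {1..n}" for i
    using z(1)[OF that] by (simp add: omega_pow_def)
  show "prefix_code (z i) < prefix_code (z i')"
    if "i \<in> {1..n}" "i' \<in> {1..n}" "i < i'" for i i'
  proof (cases "d = 0")
    case True
    then have "X \<subseteq> {[]}"
      using X_sub by (auto simp: omega_pow_def prefix_embedding_def)
    then have "n \<le> 1"
      using fin card_mono[of "{[]}" X] by simp
    then show ?thesis
      using that by simp
  next
    case False
    then have "z i \<noteq> []" "z i' \<noteq> []"
      using len[OF that(1)] len[OF that(2)] by auto
    moreover have "last (prefix_embedding H (z i)) < last (prefix_embedding H (z i'))"
      using kth_by(3)[OF fin(1) inj fin(2) that] z(2)[OF that(1)] z(2)[OF that(2)] by simp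
    ultimately show ?thesis
      by (simp add: last_prefix_embedding strict_mono_less[OF strict_mono_enumerate[OF H]])
  qed
  show "coord d X (i, j) = enumerate H (prefix_code (take (d - j) (z i)))"
    if "(i, j) \<in> CR_index n d" for i j
  proof -
    have i: "i \<in> {1..n}" and "j < d"
      using that by (auto simp: CR_index_def)
    have "coord d X (i, j) = prefix_embedding H (z i) ! (d - 1 - j)"
      using z(2)[OF i] by (simp add: coord_def)
    also have "\<dots> = enumerate H (prefix_code (take (Suc (d - 1 - j)) (z i)))"
      using len[OF i] \<open>j < d\<close> by (simp add: nth_prefix_embedding)
    also have "Suc (d - 1 - j) = d - j"
      using \<open>j < d\<close> by simp
    finally show ?thesis .
  qed
qed

lemma coord_prefix_embedding_subset:
  assumes "infinite H" and "X \<in> nsubsets (prefix_embedding H ` omega_pow d) n"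
  shows "coord d X ` CR_index n d \<subseteq> H"
proof (rule coord_prefix_embedding[OF assms])
  fix z
  assume "\<And>i j. (i, j) \<in> CR_index n d \<Longrightarrow>
            coord d X (i, j) = enumerate H (prefix_code (take (d - j) (z i)))"
  then show ?thesis
    using enumerate_in_set[OF assms(1)] by auto
qed

lemma is_CR_pattern_prefix_embedding:
  assumes "infinite H" and "X \<in> nsubsets (prefix_embedding H ` omega_pow d) n"
  shows "is_CR n d 1 (\<lambda>i\<in>{1..n}. 0) (induced_preorder (CR_index n d) (coord d X))"
proof -
  obtain z where len: "\<And>i. i \<in> {1..n} \<Longrightarrow> length (z i) = d"
    and sorted: "\<And>i i'. i \<in> {1..n} \<Longrightarrow> i' \<in> {1..n} \<Longrightarrow> i < i' \<Longrightarrow> prefix_code (z i) < prefix_code (z i')"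
    and coord_eq: "\<And>i j. (i, j) \<in> CR_index n d \<Longrightarrow>
                  coord d X (i, j) = enumerate H (prefix_code (take (d - j) (z i)))"
    using coord_prefix_embedding[OF assms] by blast
  have "induced_preorder (CR_index n d) (coord d X)
      = induced_preorder (CR_index n d) (\<lambda>p. enumerate H ((\<lambda>(i, j). prefix_code (take (d - j) (z i))) p))"
    by (rule induced_preorder_cong) (auto simp: coord_eq)
  also have "\<dots> = induced_preorder (CR_index n d) (\<lambda>(i, j). prefix_code (take (d - j) (z i)))"
    by (rule induced_preorder_strict_mono_comp[OF strict_mono_enumerate[OF assms(1)]])
  finally show ?thesis
    using is_CR_prefix_preorder[OF len sorted] by simp
qed

lemma finite_is_CR: "finite {R. is_CR n d k Y R}"
proof (rule finite_subset)
  have "R \<subseteq> CR_index n d \<times> CR_index n d" if "is_CR n d k Y R" for R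
    using that unfolding is_CR_def Let_def by (elim conjE)
  then show "{R. is_CR n d k Y R} \<subseteq> Pow (CR_index n d \<times> CR_index n d)"
    by blast
  show "finite (Pow (CR_index n d \<times> CR_index n d))"
    by (simp add: CR_index_def)
qed

lemma P_num_one_eq_card: "P_num n d 1 = card {R. is_CR n d 1 (\<lambda>i\<in>{1..n}. 0) R}"
proof -
  have Y0: "Y = (\<lambda>i\<in>{1..n}. 0)" if "is_CR n d 1 Y R" for Y R
  proof -
    have Y: "Y \<in> {1..n} \<rightarrow>\<^sub>E {0..<1}"
      using that unfolding is_CR_def Let_def by (elim conjE)
    show ?thesis
      by (rule PiE_ext[OF Y]) (use Y in \<open>auto simp: PiE_iff\<close>)
  qed
  have "{(Y, R). is_CR n d 1 Y R} = Pair (\<lambda>i\<in>{1..n}. 0) ` {R. is_CR n d 1 (\<lambda>i\<in>{1..n}. 0) R}"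
  proof (intro equalityI subsetI)
    fix x assume "x \<in> {(Y, R). is_CR n d 1 Y R}"
    then obtain Y R where "x = (Y, R)" and CR: "is_CR n d 1 Y R"
      by blast
    then show "x \<in> Pair (\<lambda>i\<in>{1..n}. 0) ` {R. is_CR n d 1 (\<lambda>i\<in>{1..n}. 0) R}"
      using Y0[OF CR] by blast
  qed blast
  moreover have "inj_on (Pair (\<lambda>i\<in>{1..n}. 0)) {R. is_CR n d 1 (\<lambda>i\<in>{1..n}. 0) R}"
    by (rule inj_onI) simp
  ultimately show ?thesis
    unfolding P_num_def by (metis card_image)
qed

lemma T_num_le_if_T_bound_ok: "T_bound_ok n S t \<Longrightarrow> T_num n S \<le> enat t"
  unfolding T_num_def by (auto intro: Least_le)

lemma colouring_factors_through_pattern: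
  fixes COL :: "nat list set \<Rightarrow> nat"
  assumes COL: "\<forall>X\<in>nsubsets (omega_pow d) n. COL X \<in> {1..c}"
  obtains H colour where "infinite H"
    and "\<And>X. X \<in> nsubsets (prefix_embedding H ` omega_pow d) n \<Longrightarrow>
           COL X = colour (induced_preorder (CR_index n d) (coord d X))"
proof -
  let ?I = "CR_index n d"
  let ?A = "{X \<in> nsubsets (omega_pow d) n. inj_on last X}"
    and ?pattern = "\<lambda>X. induced_preorder ?I (coord d X)" and ?values = "\<lambda>X. coord d X ` ?I"
  have fin: "finite (Pow (?I \<times> ?I))"
    by (simp add: CR_index_def)
  have bounded: "COL X \<le> c" if "X \<in> ?A" for X
    using COL that by auto
  have determined: "X = X'"
    if "X \<in> ?A" "X' \<in> ?A" "?pattern X = ?pattern X'" "?values X = ?values X'" for X X'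
    using that coord_determines_set by blast
  show ?thesis
  proof (rule Ramsey_colouring_by_pattern[where m = "\<lambda>R. card (?I // (R \<inter> R\<inverse>))",
        OF fin infinite_UNIV_nat bounded determined])
    fix H colour
    assume "H \<subseteq> UNIV" and H: "infinite H"
      and colour: "\<And>X. X \<in> ?A \<Longrightarrow> ?pattern X \<in> Pow (?I \<times> ?I) \<Longrightarrow>
                     ?values X \<in> [H]\<^bsup>card (?I // (?pattern X \<inter> (?pattern X)\<inverse>))\<^esup> \<Longrightarrow>
                     COL X = colour (?pattern X)"
    have "COL X = colour (?pattern X)"
      if X: "X \<in> nsubsets (prefix_embedding H ` omega_pow d) n" for X
    proof (rule colour)
      show "X \<in> ?A"
        using nsubsets_prefix_embedding[OF H X] by blast
      show "?values X \<in> [H]\<^bsup>card (?I // (?pattern X \<inter> (?pattern X)\<inverse>))\<^esup>"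
        using coord_prefix_embedding_subset[OF H X]
        by (simp add: nsets_def card_quotient_induced_preorder CR_index_def)
    qed auto
    with H show ?thesis
      by (rule that)
  qed
qed

lemma T_bound_ok_omega_pow:
  "T_bound_ok n (omega_pow d) (card {R. is_CR n d 1 (\<lambda>i\<in>{1..n}. 0) R})"
  unfolding T_bound_ok_def
proof (intro allI impI)
  fix c :: nat and COL :: "nat list set \<Rightarrow> nat"
  assume COL: "\<forall>X\<in>nsubsets (omega_pow d) n. COL X \<in> {1..c}"
  obtain H colour where H: "infinite H"
    and colour: "\<And>X. X \<in> nsubsets (prefix_embedding H ` omega_pow d) n \<Longrightarrow>
                   COL X = colour (induced_preorder (CR_index n d) (coord d X))"
    using colouring_factors_through_pattern[OF COL] by blast
  define CRs where "CRs = {R. is_CR n d 1 (\<lambda>i\<in>{1..n}. 0) R}"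
  define S' where "S' = prefix_embedding H ` omega_pow d"
  have fin: "finite CRs"
    unfolding CRs_def by (rule finite_is_CR)
  have "COL ` nsubsets S' n \<subseteq> colour ` CRs"
    using colour is_CR_pattern_prefix_embedding[OF H] unfolding S'_def CRs_def by blast
  then have "card (COL ` nsubsets S' n) \<le> card (colour ` CRs)"
    by (intro card_mono finite_imageI fin)
  also have "\<dots> \<le> card CRs"
    by (rule card_image_le[OF fin])
  finally show "\<exists>S'. S' \<subseteq> omega_pow d \<and> order_equiv S' (omega_pow d) \<and> card (COL ` nsubsets S' n) \<le> card CRs"
    using prefix_embedding_omega_pow[OF H] unfolding S'_def by blast
qed

theorem theorem8p3:
  fixes n d :: nat
  shows "T_num n (omega_pow d) \<le> enat (P_num n d 1)"
  unfolding P_num_one_eq_card by (rule T_num_le_if_T_bound_ok[OF T_bound_ok_omega_pow])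

end
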